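(* Let $\mathbf{A}'$ be an $n\times d$ matrix, $k\ge 1$, $\varepsilon\in(0,1)$, and suppose the maximum coverage optimum $\mathbf{OPT}$ of $\mathbf{A}'$ with $k$ subsets satisfies $\mathbf{OPT}\le C_1\, k\log d/\varepsilon^2$ for a constant $C_1$. Then the total number of nonzero entries among small items of $\mathbf{A}'$ is $O(d\log d/\varepsilon^2)$.
   Context: Item $i$ belongs to subset (column) $j$ iff $A'_{ij}\neq 0$. $\mathbf{OPT}$ is the maximum over sets of $k$ columns of the number of rows having a nonzero entry in at least one of those columns. An item (row) is small if it has fewer than $d/k$ nonzero entries. The implied constant in $O(\cdot)$ depends only on $C_1$. *)

theory Defs
  imports Complex_Main
begin

text \<open>An n x d real matrix is represented as A :: nat => nat => real, entries A i j
  for i < n (rows = items), j < d (columns = subsets).\<close>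

definition covered :: "(nat \<Rightarrow> nat \<Rightarrow> real) \<Rightarrow> nat \<Rightarrow> nat set \<Rightarrow> nat" where
  "covered A n S = card {i. i < n \<and> (\<exists>j\<in>S. A i j \<noteq> 0)}"

text \<open>Maximum coverage optimum with k subsets (columns); sets of at most k columns,
  which equals the optimum over exactly k columns whenever k \<le> d (coverage is monotone).\<close>
definition OPT :: "(nat \<Rightarrow> nat \<Rightarrow> real) \<Rightarrow> nat \<Rightarrow> nat \<Rightarrow> nat \<Rightarrow> nat" where
  "OPT A n d k = Max {covered A n S | S. S \<subseteq> {..<d} \<and> card S \<le> k}"

definition row_nnz :: "(nat \<Rightarrow> nat \<Rightarrow> real) \<Rightarrow> nat \<Rightarrow> nat \<Rightarrow> nat" where
  "row_nnz A d i = card {j. j < d \<and> A i j \<noteq> 0}"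

definition small_item :: "(nat \<Rightarrow> nat \<Rightarrow> real) \<Rightarrow> nat \<Rightarrow> nat \<Rightarrow> nat \<Rightarrow> bool" where
  "small_item A d k i \<longleftrightarrow> real (row_nnz A d i) < real d / real k"

definition small_nnz :: "(nat \<Rightarrow> nat \<Rightarrow> real) \<Rightarrow> nat \<Rightarrow> nat \<Rightarrow> nat \<Rightarrow> nat" where
  "small_nnz A n d k = (\<Sum>i | i < n \<and> small_item A d k i. row_nnz A d i)"

end

theory Submission
  imports Defs
begin

text \<open>Let \<open>T i\<close> be the set of columns in which item \<open>i\<close> is nonzero. Greedily adding
  a column that meets the most sets \<open>T i\<close> not met so far maintains the invariant
  \<open>t \<cdot> U \<le> d \<cdot> h\<close> after \<open>t\<close> steps, where \<open>h\<close> counts the items already hit and \<open>U\<close> is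
  the total size of the remaining \<open>T i\<close>: by double counting, some column lies in at least
  \<open>U / d\<close> of them. For small items \<open>|T i| \<le> d / k\<close>, so the hit items have total size at
  most \<open>h \<cdot> d / k\<close>. After \<open>k\<close> steps the total size of all small \<open>T i\<close> is therefore at most
  \<open>2 d h / k \<le> 2 d \<cdot> OPT / k\<close>, and the assumed bound on \<open>OPT\<close> gives the claim with
  \<open>C = 2 C\<^sub>1\<close>.\<close>

lemma exists_popular_element:
  assumes "finite I" "finite D" "D \<noteq> {}" "\<forall>i\<in>I. T i \<subseteq> D"
  shows "\<exists>j\<in>D. (\<Sum>i\<in>I. card (T i)) \<le> card D * card {i\<in>I. j \<in> T i}"
proof -
  define f where "f j = card {i\<in>I. j \<in> T i}" for j
  have "Max (f ` D) \<in> f ` D"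
    using assms(2,3) by simp
  then obtain j where j: "j \<in> D" "f j = Max (f ` D)"
    by (metis imageE)
  have "(\<Sum>i\<in>I. card (T i)) = (\<Sum>i\<in>I. card {j\<in>D. j \<in> T i})"
    using assms(4) by (intro sum.cong) (auto intro: arg_cong[where f = card])
  also have "\<dots> = (\<Sum>j\<in>D. f j)"
    using assms(1,2) unfolding f_def by (rule sum_multicount_gen) simp
  also have "\<dots> \<le> card D * f j"
    using sum_bounded_above[of D f "f j"] j assms(2) by simp
  finally show ?thesis
    using j(1) unfolding f_def by blast
qed

lemma greedy_hitting_set:
  assumes "finite I" "finite D" "D \<noteq> {}" "\<forall>i\<in>I. T i \<subseteq> D"
  shows "\<exists>S\<subseteq>D. card S \<le> t \<and>
    t * (\<Sum>i | i \<in> I \<and> T i \<inter> S = {}. card (T i)) \<le> card D * card {i\<in>I. T i \<inter> S \<noteq> {}}"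
proof (induction t)
  case 0
  show ?case by (intro exI[of _ "{}"]) simp
next
  case (Suc t)
  then obtain S where S: "S \<subseteq> D" "card S \<le> t"
    and inv: "t * (\<Sum>i | i \<in> I \<and> T i \<inter> S = {}. card (T i)) \<le> card D * card {i\<in>I. T i \<inter> S \<noteq> {}}"
    by blast
  define unhit where "unhit = {i\<in>I. T i \<inter> S = {}}"
  define U where "U = (\<Sum>i\<in>unhit. card (T i))"
  obtain j where j: "j \<in> D" and popular: "U \<le> card D * card {i\<in>unhit. j \<in> T i}"
    using exists_popular_element[of unhit D T] assms unfolding U_def unhit_def by auto
  define S' where "S' = insert j S"
  have "(\<Sum>i | i \<in> I \<and> T i \<inter> S' = {}. card (T i)) \<le> U"
    unfolding U_def unhit_def S'_def using assms(1) by (intro sum_mono2) auto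
  then have "Suc t * (\<Sum>i | i \<in> I \<and> T i \<inter> S' = {}. card (T i)) \<le> Suc t * U"
    by (rule mult_le_mono2)
  also have "\<dots> = t * U + U"
    by simp
  also have "\<dots> \<le> card D * card {i\<in>I. T i \<inter> S \<noteq> {}} + card D * card {i\<in>unhit. j \<in> T i}"
    using inv popular unfolding U_def unhit_def by (intro add_mono) simp_all
  also have "\<dots> = card D * card {i\<in>I. T i \<inter> S' \<noteq> {}}"
  proof -
    have "{i\<in>I. T i \<inter> S' \<noteq> {}} = {i\<in>I. T i \<inter> S \<noteq> {}} \<union> {i\<in>unhit. j \<in> T i}"
      unfolding S'_def unhit_def by auto
    moreover have "card \<dots> = card {i\<in>I. T i \<inter> S \<noteq> {}} + card {i\<in>unhit. j \<in> T i}"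
      using assms(1) unfolding unhit_def by (intro card_Un_disjoint) auto
    ultimately show ?thesis by (simp add: add_mult_distrib2)
  qed
  finally show ?case
    using S j card_insert_le_m1[of "Suc t" S j] finite_subset[OF S(1) assms(2)]
    unfolding S'_def by (intro exI[of _ "insert j S"]) (auto simp: card_insert_if)
qed

lemma hitting_set_for_small_sets:
  assumes "finite I" "finite D" "D \<noteq> {}" "\<forall>i\<in>I. T i \<subseteq> D"
    and small: "\<forall>i\<in>I. k * card (T i) \<le> card D"
  shows "\<exists>S\<subseteq>D. card S \<le> k \<and>
    k * (\<Sum>i\<in>I. card (T i)) \<le> 2 * card D * card {i\<in>I. T i \<inter> S \<noteq> {}}"
proof -
  obtain S where S: "S \<subseteq> D" "card S \<le> k"
    and unhit: "k * (\<Sum>i | i \<in> I \<and> T i \<inter> S = {}. card (T i)) \<le> card D * card {i\<in>I. T i \<inter> S \<noteq> {}}"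
    using greedy_hitting_set[OF assms(1-4)] by blast
  define hit where "hit = {i\<in>I. T i \<inter> S \<noteq> {}}"
  have "k * (\<Sum>i\<in>hit. card (T i)) = (\<Sum>i\<in>hit. k * card (T i))"
    by (rule sum_distrib_left)
  also have "\<dots> \<le> card D * card hit"
    using sum_bounded_above[of hit "\<lambda>i. k * card (T i)" "card D"] small
    unfolding hit_def by (simp add: mult.commute)
  finally have "k * (\<Sum>i\<in>hit. card (T i)) \<le> card D * card hit" .
  moreover have "(\<Sum>i\<in>I. card (T i)) = (\<Sum>i\<in>hit. card (T i)) + (\<Sum>i | i \<in> I \<and> T i \<inter> S = {}. card (T i))"
    using assms(1) unfolding hit_def by (subst sum.union_disjoint[symmetric]) (auto intro: sum.cong)
  ultimately show ?thesis
    using S unhit unfolding hit_def by (intro exI[of _ S]) (simp add: add_mult_distrib2)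
qed

lemma covered_le_OPT:
  assumes "S \<subseteq> {..<d}" "card S \<le> k"
  shows "covered A n S \<le> OPT A n d k"
proof -
  have "{covered A n S | S. S \<subseteq> {..<d} \<and> card S \<le> k} = covered A n ` {S. S \<subseteq> {..<d} \<and> card S \<le> k}"
    by auto
  then show ?thesis
    unfolding OPT_def using assms by (intro Max_ge) auto
qed

lemma small_nnz_le_OPT: "k * small_nnz A n d k \<le> 2 * d * OPT A n d k"
proof (cases "k = 0 \<or> d = 0")
  case True
  then show ?thesis
    by (auto simp: small_nnz_def small_item_def)
next
  case False
  define T where "T i = {j. j < d \<and> A i j \<noteq> 0}" for i
  define I where "I = {i. i < n \<and> small_item A d k i}"
  have small: "\<forall>i\<in>I. k * card (T i) \<le> d"
    using False unfolding I_def small_item_def row_nnz_def T_def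
    by (auto simp: field_simps simp flip: of_nat_mult)
  obtain S where S: "S \<subseteq> {..<d}" "card S \<le> k"
    and hit: "k * (\<Sum>i\<in>I. card (T i)) \<le> 2 * d * card {i\<in>I. T i \<inter> S \<noteq> {}}"
    using hitting_set_for_small_sets[of I "{..<d}" T k] small False
    unfolding I_def T_def by auto
  have "card {i\<in>I. T i \<inter> S \<noteq> {}} \<le> covered A n S"
    unfolding covered_def I_def T_def using S(1) by (intro card_mono) auto
  also have "\<dots> \<le> OPT A n d k"
    using S by (rule covered_le_OPT)
  finally show ?thesis
    using hit unfolding small_nnz_def I_def row_nnz_def T_def
    by (meson le_trans mult_le_mono2)
qed

theorem lemma9:
  fixes C1 :: real
  shows "\<exists>C::real. \<forall>(A :: nat \<Rightarrow> nat \<Rightarrow> real) n d k (\<epsilon>::real).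
           k \<ge> 1 \<longrightarrow> 0 < \<epsilon> \<longrightarrow> \<epsilon> < 1 \<longrightarrow>
           real (OPT A n d k) \<le> C1 * real k * ln (real d) / \<epsilon>\<^sup>2 \<longrightarrow>
           real (small_nnz A n d k) \<le> C * real d * ln (real d) / \<epsilon>\<^sup>2"
proof (intro exI[of _ "2 * C1"] allI impI)
  fix A :: "nat \<Rightarrow> nat \<Rightarrow> real" and n d k :: nat and \<epsilon> :: real
  assume k: "k \<ge> 1"
    and opt: "real (OPT A n d k) \<le> C1 * real k * ln (real d) / \<epsilon>\<^sup>2"
  have "real k * real (small_nnz A n d k) \<le> 2 * real d * real (OPT A n d k)"
    using small_nnz_le_OPT[of k A n d] by (metis of_nat_le_iff of_nat_mult of_nat_numeral)
  also have "\<dots> \<le> 2 * real d * (C1 * real k * ln (real d) / \<epsilon>\<^sup>2)"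
    using opt by (intro mult_left_mono) auto
  also have "\<dots> = real k * (2 * C1 * real d * ln (real d) / \<epsilon>\<^sup>2)"
    by (simp add: field_simps)
  finally show "real (small_nnz A n d k) \<le> 2 * C1 * real d * ln (real d) / \<epsilon>\<^sup>2"
    by (rule mult_left_le_imp_le) (use k in simp)
qed

end
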